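(* Let $U,V\subseteq M$ be open, let $\Psi:U\to V$ be a diffeomorphism with $\Psi^*t=t$, and let $g$ be a slice-compatible Lorentzian metric on $V$ with shift $X$. For a tensor field $T$ on $V$ define $B=\mathcal S(T;X)$ and $\hat B=\mathcal S(\Psi^*T;\hat X)$, where $\hat X$ is the shift of the slice-compatible Lorentzian metric $\Psi^*g$. Then $\hat B=j_*\Psi^*B$. If additionally $\Psi$ is the identity on $\Sigma_{t_0}\cap U$ for some $t_0$, then on $\Sigma_{t_0}\cap U$ we have $\hat B=B$ and $\mathcal L_S\hat B=\mathcal L_SB$ for all spatial vector fields $S$.
   Context: $M=\Sigma\times I$, where $\Sigma\subseteq\mathbb R^n$ is open with coordinates $x^1,\dots,x^n$ and $I\subseteq\mathbb R$ is an open interval with coordinate $t$; $\Sigma_t=\Sigma\times\{t\}$; all fields smooth. A tensor is spatial if it vanishes whenever one of its arguments is $dt$ or $\partial_t$. The projection $j_*$: $j_*dt=0$, $j_*dx^i=dx^i$, $j_*\partial_t=0$, $j_*\partial_{x^i}=\partial_{x^i}$, $j_*T(\cdot,\dots,\cdot)=T(j_*\cdot,\dots,j_*\cdot)$. $\Psi^*$ acts on vectors by $\Psi^*Y=(\Psi^{-1})_*Y$. A Lorentzian metric $g$ is slice compatible if its restriction to each $\Sigma_t$ is Riemannian; its unit normal $\nu$ satisfies $\nu(dt)>0$, $g(\nu,\nu)=-1$, $j_*g(\nu,\cdot)=0$; writing $\partial_t=N\nu+X$ with $X$ spatial defines the shift $X$ (and lapse $N$). Decomposition of tensors: for a spatial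 vector field $X$, let $\mathcal P_X(a\partial_t+W)=aX+W$ ($W$ spatial) and $\mathcal P_X^*$ its adjoint on 1-forms, $(\mathcal P_X^*\omega)(Z)=\omega(\mathcal P_XZ)$. For a tensor $T$ of rank $k$, one obtains $2^k$ spatial tensors by choosing, for each slot taking a vector, either to insert $\partial_t-X$ or to precompose with $j_*$, and for each slot taking a covector, either to insert $dt$ or to precompose with $\mathcal P_X^*$ (e.g. $b\,dt+\eta\mapsto(b-\eta(X),\eta)$ and $a\partial_t+W\mapsto(a,W+aX)$). In a fixed order these form the tuple $\mathcal S(T;X)$. The operations $j_*$, $\Psi^*$ and $\mathcal L_S$ act on such tuples componentwise. *)

theory Defs
  imports "HOL-Analysis.Analysis"
begin

text \<open>Coordinates: a point of M = Sigma x I is a pair (x, t) with x :: real^'n, t :: real.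
  Tangent vectors a d_t + W and covectors b dt + eta are both represented by their
  components (W, a), resp. (eta, b), in real^'n x real; the pairing of a covector with a
  vector is then the inner product of the component pairs.\<close>

type_synonym ('n) pt = "(real^('n::finite)) \<times> real"

fun Ck :: "nat \<Rightarrow> 'a::real_normed_vector set \<Rightarrow> ('a \<Rightarrow> 'b::real_normed_vector) \<Rightarrow> bool" where
  "Ck 0 S f = continuous_on S f"
| "Ck (Suc k) S f =
     (\<exists>f'. (\<forall>x\<in>S. (f has_derivative f' x) (at x)) \<and> (\<forall>v. Ck k S (\<lambda>x. f' x v)))"

definition smooth_on :: "'a::real_normed_vector set \<Rightarrow> ('a \<Rightarrow> 'b::real_normed_vector) \<Rightarrow> bool" where
  "smooth_on S f \<longleftrightarrow> (\<forall>k. Ck k S f)"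

definition diffeo :: "('n::finite) pt set \<Rightarrow> ('n::finite) pt set \<Rightarrow> (('n::finite) pt \<Rightarrow> ('n::finite) pt) \<Rightarrow> bool" where
  "diffeo U V \<Psi> \<longleftrightarrow> smooth_on U \<Psi> \<and> bij_betw \<Psi> U V \<and>
     (\<exists>\<Phi>. smooth_on V \<Phi> \<and> (\<forall>p\<in>U. \<Phi> (\<Psi> p) = p) \<and> (\<forall>q\<in>V. \<Psi> (\<Phi> q) = q))"

text \<open>A tensor field of rank k on V: T p args, where args i (i < k) is the i-th argument;
  kinds i = True means slot i takes a vector, False means it takes a covector.\<close>
definition tensor_field :: "nat \<Rightarrow> ('n::finite) pt set \<Rightarrow> (('n::finite) pt \<Rightarrow> (nat \<Rightarrow> ('n::finite) pt) \<Rightarrow> real) \<Rightarrow> bool" where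
  "tensor_field k V T \<longleftrightarrow>
     (\<forall>p\<in>V. \<forall>args. \<forall>i<k. linear (\<lambda>x. T p (args(i := x)))) \<and>
     (\<forall>p args args'. (\<forall>i<k. args i = args' i) \<longrightarrow> T p args = T p args') \<and>
     (\<forall>args. smooth_on V (\<lambda>p. T p args))"

definition lorentzian_form :: "(('n::finite) pt \<Rightarrow> ('n::finite) pt \<Rightarrow> real) \<Rightarrow> bool" where
  "lorentzian_form B \<longleftrightarrow> bilinear B \<and> (\<forall>v w. B v w = B w v) \<and>
     (\<exists>e :: 'n option \<Rightarrow> ('n::finite) pt. \<forall>a b. B (e a) (e b) =
        (if a = b then (if a = None then -1 else 1) else 0))"

definition slice_compatible_lorentzian ::
  "('n::finite) pt set \<Rightarrow> (('n::finite) pt \<Rightarrow> ('n::finite) pt \<Rightarrow> ('n::finite) pt \<Rightarrow> real) \<Rightarrow> bool" where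
  "slice_compatible_lorentzian V g \<longleftrightarrow>
     (\<forall>v w. smooth_on V (\<lambda>p. g p v w)) \<and>
     (\<forall>p\<in>V. lorentzian_form (g p)) \<and>
     (\<forall>p\<in>V. \<forall>W. W \<noteq> 0 \<longrightarrow> g p (W, 0) (W, 0) > 0)"

definition unit_normal :: "(('n::finite) pt \<Rightarrow> ('n::finite) pt \<Rightarrow> ('n::finite) pt \<Rightarrow> real) \<Rightarrow> ('n::finite) pt \<Rightarrow> ('n::finite) pt" where
  "unit_normal g p = (THE \<nu>. snd \<nu> > 0 \<and> g p \<nu> \<nu> = -1 \<and> (\<forall>W. g p \<nu> (W, 0) = 0))"

definition shift :: "(('n::finite) pt \<Rightarrow> ('n::finite) pt \<Rightarrow> ('n::finite) pt \<Rightarrow> real) \<Rightarrow> ('n::finite) pt \<Rightarrow> ('n::finite) pt" where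
  "shift g p = (THE X. snd X = 0 \<and> (\<exists>N. ((0, 1) :: ('n::finite) pt) = N *\<^sub>R unit_normal g p + X))"

definition dmap :: "(('n::finite) pt \<Rightarrow> ('n::finite) pt) \<Rightarrow> ('n::finite) pt \<Rightarrow> ('n::finite) pt \<Rightarrow> ('n::finite) pt" where
  "dmap \<Psi> p = frechet_derivative \<Psi> (at p)"

text \<open>Pullback of a metric and of a tensor field (vectors pushed forward by d Psi,
  covectors pulled back by (d Psi)^(-1), i.e. omega maps to omega o (d Psi_p)^(-1)).\<close>
definition pullback_metric ::
  "(('n::finite) pt \<Rightarrow> ('n::finite) pt) \<Rightarrow> (('n::finite) pt \<Rightarrow> ('n::finite) pt \<Rightarrow> ('n::finite) pt \<Rightarrow> real) \<Rightarrow> ('n::finite) pt \<Rightarrow> ('n::finite) pt \<Rightarrow> ('n::finite) pt \<Rightarrow> real" where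
  "pullback_metric \<Psi> g p v w = g (\<Psi> p) (dmap \<Psi> p v) (dmap \<Psi> p w)"

definition pullback ::
  "nat \<Rightarrow> (nat \<Rightarrow> bool) \<Rightarrow> (('n::finite) pt \<Rightarrow> ('n::finite) pt) \<Rightarrow> (('n::finite) pt \<Rightarrow> (nat \<Rightarrow> ('n::finite) pt) \<Rightarrow> real)
     \<Rightarrow> ('n::finite) pt \<Rightarrow> (nat \<Rightarrow> ('n::finite) pt) \<Rightarrow> real" where
  "pullback k kinds \<Psi> T p args = T (\<Psi> p) (\<lambda>i. if i < k then
      (if kinds i then dmap \<Psi> p (args i) else adjoint (inv (dmap \<Psi> p)) (args i))
     else args i)"

definition jproj :: "('n::finite) pt \<Rightarrow> ('n::finite) pt" where
  "jproj v = (fst v, 0)"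

definition jstar ::
  "nat \<Rightarrow> (('n::finite) pt \<Rightarrow> (nat \<Rightarrow> ('n::finite) pt) \<Rightarrow> real) \<Rightarrow> ('n::finite) pt \<Rightarrow> (nat \<Rightarrow> ('n::finite) pt) \<Rightarrow> real" where
  "jstar k T p args = T p (\<lambda>i. if i < k then jproj (args i) else args i)"

definition PXstar :: "('n::finite) pt \<Rightarrow> ('n::finite) pt \<Rightarrow> ('n::finite) pt" where
  "PXstar X \<omega> = (fst \<omega>, fst \<omega> \<bullet> fst X)"

text \<open>The tuple S(T;X), indexed by choices c: c i = True means insert (d_t - X) (vector slot)
  resp. dt (covector slot) in slot i; c i = False means precompose with j_* resp. P_X^*.\<close>
definition decomp ::
  "nat \<Rightarrow> (nat \<Rightarrow> bool) \<Rightarrow> (('n::finite) pt \<Rightarrow> (nat \<Rightarrow> ('n::finite) pt) \<Rightarrow> real) \<Rightarrow> (('n::finite) pt \<Rightarrow> ('n::finite) pt)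
     \<Rightarrow> (nat \<Rightarrow> bool) \<Rightarrow> ('n::finite) pt \<Rightarrow> (nat \<Rightarrow> ('n::finite) pt) \<Rightarrow> real" where
  "decomp k kinds T X c p args = T p (\<lambda>i. if i < k then
      (if kinds i then (if c i then (0, 1) - X p else jproj (args i))
                  else (if c i then (0, 1) else PXstar (X p) (args i)))
     else args i)"

text \<open>Lie derivative along a vector field S (coordinate formula with constant-coefficient
  arguments).\<close>
definition lie ::
  "nat \<Rightarrow> (nat \<Rightarrow> bool) \<Rightarrow> (('n::finite) pt \<Rightarrow> ('n::finite) pt) \<Rightarrow> (('n::finite) pt \<Rightarrow> (nat \<Rightarrow> ('n::finite) pt) \<Rightarrow> real)
     \<Rightarrow> ('n::finite) pt \<Rightarrow> (nat \<Rightarrow> ('n::finite) pt) \<Rightarrow> real" where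
  "lie k kinds S T p args =
     frechet_derivative (\<lambda>q. T q args) (at p) (S p) +
     (\<Sum>i<k. if kinds i then T p (args(i := dmap S p (args i)))
             else - T p (args(i := adjoint (dmap S p) (args i))))"

end

theory Submission
  imports Defs
begin

(*
  If (W, 1) is g-orthogonal to the slice, the unit normal is a positive multiple of (W, 1) and
  the shift is X = (-W, 0), so d_t - X is the normal direction scaled to dt-component 1.  The
  differential D of a t-preserving diffeomorphism satisfies dt o D = dt, hence the pulled-back
  metric has normal direction D^-1 (d_t - X), i.e. D (d_t - Xhat) = d_t - X.  Dually, pulling
  back covectors fixes dt and turns P_Xhat^* into P_X^* o j_*.  Slot by slot this gives
  Bhat = j_* Psi^* B.  If Psi is the identity on Sigma_t0, then D is the identity on spatial
  vectors there, so Bhat = B on the slice; as both are differentiable (Cramer's rule makes the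
  shift depend smoothly on g), their derivatives in spatial directions agree too, and nothing
  else enters the Lie derivative along a spatial S at points of the slice.
*)

section \<open>Slice-compatible forms and the shift\<close>

definition slice_compatible_form :: "('n::finite pt \<Rightarrow> 'n pt \<Rightarrow> real) \<Rightarrow> bool" where
  "slice_compatible_form G \<longleftrightarrow> lorentzian_form G \<and> (\<forall>W. W \<noteq> 0 \<longrightarrow> G (W, 0) (W, 0) > 0)"

lemma slice_compatible_lorentzian_form:
  "slice_compatible_lorentzian V g \<Longrightarrow> p \<in> V \<Longrightarrow> slice_compatible_form (g p)"
  by (simp add: slice_compatible_lorentzian_def slice_compatible_form_def)

lemma slice_compatible_form_bilinear: "slice_compatible_form G \<Longrightarrow> bilinear G"
  by (simp add: slice_compatible_form_def lorentzian_form_def)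

lemma slice_compatible_form_spatial_nonneg:
  assumes "slice_compatible_form G" shows "G (W, 0) (W, 0) \<ge> 0"
proof (cases "W = 0")
  case True
  then show ?thesis
    using bilinear_lzero[OF slice_compatible_form_bilinear[OF assms]] by (simp add: zero_prod_def)
next
  case False
  then show ?thesis using assms by (auto simp: slice_compatible_form_def intro: less_imp_le)
qed

lemma slice_compatible_form_spatial_orthogonal_eq_0:
  assumes "slice_compatible_form G" "\<forall>U. G (W, 0) (U, 0) = 0" shows "W = 0"
  using assms unfolding slice_compatible_form_def by force

lemma slice_orthogonal_eq_scaleR:
  assumes G: "slice_compatible_form G" and W: "\<forall>U. G (W, 1) (U, 0) = 0"
    and \<mu>: "\<forall>U. G \<mu> (U, 0) = 0"
  shows "\<mu> = snd \<mu> *\<^sub>R (W, 1)"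
proof -
  define v where "v = (W, 1::real)"
  have bl: "bilinear G" using G by (rule slice_compatible_form_bilinear)
  have "G (fst \<mu> - snd \<mu> *\<^sub>R W, 0) (U, 0) = 0" for U
  proof -
    have "(fst \<mu> - snd \<mu> *\<^sub>R W, 0) = \<mu> - snd \<mu> *\<^sub>R v" by (cases \<mu>) (simp add: v_def)
    then have "G (fst \<mu> - snd \<mu> *\<^sub>R W, 0) (U, 0) = G \<mu> (U, 0) - snd \<mu> * G v (U, 0)"
      by (simp add: bilinear_lsub[OF bl] bilinear_lmul[OF bl])
    then show ?thesis using W \<mu> by (simp add: v_def)
  qed
  then have "fst \<mu> - snd \<mu> *\<^sub>R W = 0"
    using slice_compatible_form_spatial_orthogonal_eq_0[OF G] by blast
  then show ?thesis by (simp add: prod_eq_iff)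
qed

lemma slice_normal_timelike:
  fixes G :: "'n::finite pt \<Rightarrow> 'n pt \<Rightarrow> real"
  assumes G: "slice_compatible_form G" and W: "\<forall>U. G (W, 1) (U, 0) = 0"
  shows "G (W, 1) (W, 1) < 0"
proof (rule ccontr)
  define v where "v = (W, 1::real)"
  have bl: "bilinear G" using G by (rule slice_compatible_form_bilinear)
  have sym: "G x y = G y x" for x y
    using G unfolding slice_compatible_form_def lorentzian_form_def by blast
  obtain e :: "'n option \<Rightarrow> 'n pt"
    where e: "\<forall>a b. G (e a) (e b) = (if a = b then if a = None then -1 else 1 else 0)"
    using G unfolding slice_compatible_form_def lorentzian_form_def by blast
  define z where "z = e None"
  have z: "G z z < 0" using e by (simp add: z_def)
  assume "\<not> G (W, 1) (W, 1) < 0"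
  then have "G v v \<ge> 0" by (simp add: v_def)
  \<comment> \<open>Then G would be positive semidefinite: writing z as a multiple of v plus a spatial
    vector, the cross terms vanish.\<close>
  define a where "a = snd z"
  define s where "s = (fst z - a *\<^sub>R W, 0::real)"
  have "z = a *\<^sub>R v + s" by (simp add: a_def s_def v_def prod_eq_iff)
  then have "G z z = G (a *\<^sub>R v + s) (a *\<^sub>R v + s)" by simp
  also have "\<dots> = a * a * G v v + a * G v s + a * G s v + G s s"
    by (simp add: bilinear_ladd[OF bl] bilinear_radd[OF bl] bilinear_lmul[OF bl]
        bilinear_rmul[OF bl] algebra_simps)
  also have "\<dots> = a * a * G v v + G s s"
    using W sym[of s v] by (simp add: s_def v_def)
  also have "\<dots> \<ge> 0"
    using \<open>G v v \<ge> 0\<close> slice_compatible_form_spatial_nonneg[OF G] by (simp add: s_def)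
  finally show False using z by simp
qed

lemma unit_normal_eq:
  assumes G: "slice_compatible_form (g p)" and W: "\<forall>U. g p (W, 1) (U, 0) = 0"
  shows "unit_normal g p = (1 / sqrt (- g p (W, 1) (W, 1))) *\<^sub>R (W, 1)"
proof -
  define v where "v = (W, 1::real)"
  define c where "c = sqrt (- g p v v)"
  have bl: "bilinear (g p)" using G by (rule slice_compatible_form_bilinear)
  have timelike: "g p v v < 0" unfolding v_def using G W by (rule slice_normal_timelike)
  then have c: "c > 0" "c * c = - g p v v" by (simp_all add: c_def)
  show ?thesis
    unfolding unit_normal_def v_def[symmetric] c_def[symmetric]
  proof (rule the_equality)
    show "0 < snd ((1 / c) *\<^sub>R v) \<and> g p ((1 / c) *\<^sub>R v) ((1 / c) *\<^sub>R v) = -1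
        \<and> (\<forall>U. g p ((1 / c) *\<^sub>R v) (U, 0) = 0)"
    proof -
      have "g p ((1 / c) *\<^sub>R v) ((1 / c) *\<^sub>R v) = g p v v / (c * c)"
        by (simp add: bilinear_lmul[OF bl] bilinear_rmul[OF bl])
      moreover have "g p ((1 / c) *\<^sub>R v) (U, 0) = 0" for U
        using W bilinear_lmul[OF bl, of "1 / c" v] by (simp add: v_def)
      ultimately show ?thesis using c timelike by (simp add: v_def)
    qed
  next
    fix \<mu> assume \<mu>: "0 < snd \<mu> \<and> g p \<mu> \<mu> = -1 \<and> (\<forall>U. g p \<mu> (U, 0) = 0)"
    define m where "m = snd \<mu>"
    have \<mu>_eq: "\<mu> = m *\<^sub>R v"
      unfolding m_def v_def using G W \<mu> by (blast intro: slice_orthogonal_eq_scaleR)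
    then have "m * m * g p v v = -1" using \<mu> by (simp add: bilinear_lmul[OF bl] bilinear_rmul[OF bl])
    then have "m\<^sup>2 = (1 / c)\<^sup>2" using c timelike by (simp add: power2_eq_square field_simps)
    then have "m = 1 / c" using \<mu> c by (simp add: m_def power2_eq_iff_nonneg)
    then show "\<mu> = (1 / c) *\<^sub>R v" using \<mu>_eq by simp
  qed
qed

lemma shift_eqI:
  fixes g :: "'n::finite pt \<Rightarrow> 'n pt \<Rightarrow> 'n pt \<Rightarrow> real"
  assumes G: "slice_compatible_form (g p)" and W: "\<forall>U. g p (W, 1) (U, 0) = 0"
  shows "shift g p = (- W, 0)"
proof -
  define c where "c = sqrt (- g p (W, 1) (W, 1))"
  have "c > 0" using slice_normal_timelike[OF G W] by (simp add: c_def)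
  show ?thesis
    unfolding shift_def unit_normal_eq[of g p W, OF G W] c_def[symmetric]
  proof (rule the_equality)
    show "snd (- W, 0::real) = 0 \<and> (\<exists>N. ((0, 1) :: 'n pt) = N *\<^sub>R ((1 / c) *\<^sub>R (W, 1)) + (- W, 0))"
      using \<open>c > 0\<close> by (auto intro!: exI[of _ c])
  next
    fix X :: "'n pt" assume "snd X = 0 \<and> (\<exists>N. ((0, 1) :: 'n pt) = N *\<^sub>R ((1 / c) *\<^sub>R (W, 1)) + X)"
    then obtain N where "snd X = 0" "((0, 1) :: 'n pt) = N *\<^sub>R ((1 / c) *\<^sub>R (W, 1)) + X" by blast
    then show "X = (- W, 0)" using \<open>c > 0\<close> by (simp add: prod_eq_iff add_eq_0_iff)
  qed
qed

definition spatial_basis :: "'n::finite \<Rightarrow> 'n pt" where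
  "spatial_basis i = (axis i 1, 0)"

lemma linear_spatial_expansion:
  assumes "linear f"
  shows "f ((W::real^'n::finite), 0) = (\<Sum>i\<in>UNIV. W $ i *\<^sub>R f (spatial_basis i))"
proof -
  have "W = (\<Sum>i\<in>UNIV. W $ i *\<^sub>R axis i 1)"
    by (metis (no_types, lifting) basis_expansion scalar_mult_eq_scaleR sum.cong)
  then have "(W, 0::real) = (\<Sum>i\<in>UNIV. W $ i *\<^sub>R spatial_basis i)"
    by (simp add: spatial_basis_def fst_sum snd_sum prod_eq_iff)
  then show ?thesis by (simp add: linear_sum[OF assms] linear_scale[OF assms])
qed

lemma bilinear_spatial_expansion:
  assumes "bilinear G"
  shows "G ((U::real^'n::finite), 0) y = (\<Sum>i\<in>UNIV. U $ i * G (spatial_basis i) y)"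
    and "G x (U, 0) = (\<Sum>i\<in>UNIV. U $ i * G x (spatial_basis i))"
proof -
  have "linear (\<lambda>x. G x y)" "linear (G x)" using assms unfolding bilinear_def by blast+
  from linear_spatial_expansion[OF this(1)] linear_spatial_expansion[OF this(2)]
  show "G (U, 0) y = (\<Sum>i\<in>UNIV. U $ i * G (spatial_basis i) y)"
    and "G x (U, 0) = (\<Sum>i\<in>UNIV. U $ i * G x (spatial_basis i))"
    by simp_all
qed

definition spatial_gram :: "('n::finite pt \<Rightarrow> 'n pt \<Rightarrow> real) \<Rightarrow> real^'n^'n" where
  "spatial_gram G = (\<chi> j i. G (spatial_basis i) (spatial_basis j))"

definition time_spatial_row :: "('n::finite pt \<Rightarrow> 'n pt \<Rightarrow> real) \<Rightarrow> real^'n" where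
  "time_spatial_row G = (\<chi> j. G (0, 1) (spatial_basis j))"

text \<open>Cramer's rule for the solution W of \<open>spatial_gram G *v W = - time_spatial_row G\<close>,
  written out so that its differentiable dependence on the metric coefficients is evident.\<close>
definition normal_spatial_part :: "('n::finite pt \<Rightarrow> 'n pt \<Rightarrow> real) \<Rightarrow> real^'n" where
  "normal_spatial_part G =
     (\<chi> k. det (\<chi> i j. if j = k then (- time_spatial_row G) $ i else spatial_gram G $ i $ j)
           / det (spatial_gram G))"

lemma det_spatial_gram_neq_0:
  assumes G: "slice_compatible_form G" shows "det (spatial_gram G) \<noteq> 0"
proof -
  have bl: "bilinear G" using G by (rule slice_compatible_form_bilinear)
  have "x = 0" if x: "spatial_gram G *v x = 0" for x
  proof (rule ccontr)
    assume "x \<noteq> 0"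
    then have "G (x, 0) (x, 0) > 0" using G by (simp add: slice_compatible_form_def)
    moreover have "G (x, 0) (x, 0) = x \<bullet> (spatial_gram G *v x)"
      by (simp add: bilinear_spatial_expansion[OF bl] matrix_vector_mult_def spatial_gram_def
          inner_vec_def sum_distrib_left mult.commute mult.left_commute)
    ultimately show False using x by simp
  qed
  then have "\<exists>B. B ** spatial_gram G = mat 1" using matrix_left_invertible_ker by blast
  then show ?thesis using invertible_left_inverse invertible_det_nz by blast
qed

lemma normal_spatial_part_orthogonal:
  assumes G: "slice_compatible_form G"
  shows "\<forall>U. G (normal_spatial_part G, 1) (U, 0) = 0"
proof
  fix U
  let ?W = "normal_spatial_part G"
  have bl: "bilinear G" using G by (rule slice_compatible_form_bilinear)
  have sol: "spatial_gram G *v ?W = - time_spatial_row G"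
    by (subst cramer[OF det_spatial_gram_neq_0[OF G]]) (simp add: normal_spatial_part_def)
  have "G (?W, 1) (spatial_basis j) = 0" for j
  proof -
    have "G (?W, 1) (spatial_basis j) = G ((?W, 0) + (0, 1)) (spatial_basis j)" by simp
    also have "\<dots> = G (?W, 0) (spatial_basis j) + G (0, 1) (spatial_basis j)"
      by (rule bilinear_ladd[OF bl])
    also have "\<dots> = (spatial_gram G *v ?W) $ j + time_spatial_row G $ j"
      by (simp add: bilinear_spatial_expansion[OF bl] matrix_vector_mult_def
          spatial_gram_def time_spatial_row_def mult.commute)
    finally show ?thesis using sol by simp
  qed
  then show "G (?W, 1) (U, 0) = 0" by (simp add: bilinear_spatial_expansion[OF bl])
qed

lemma shift_eq_normal_spatial_part:
  "slice_compatible_form (g p) \<Longrightarrow> shift g p = (- normal_spatial_part (g p), 0)"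
  by (rule shift_eqI[OF _ normal_spatial_part_orthogonal])

lemma snd_shift: "slice_compatible_form (g p) \<Longrightarrow> snd (shift g p) = 0"
  by (simp add: shift_eq_normal_spatial_part)

section \<open>Pullback by a time-preserving linear isomorphism\<close>

lemma linear_injective_inv:
  fixes D :: "'a::euclidean_space \<Rightarrow> 'a"
  assumes "linear D" "inj D"
  shows "linear (inv D)" "D (inv D y) = y"
  using assms inj_linear_imp_inv_linear linear_inj_imp_surj surj_f_inv_f by metis+

lemma slice_compatible_form_pullback:
  fixes G :: "'n::finite pt \<Rightarrow> 'n pt \<Rightarrow> real" and D :: "'n pt \<Rightarrow> 'n pt"
  assumes G: "slice_compatible_form G" and D: "linear D" "inj D" and snd_D: "\<And>v. snd (D v) = snd v"
  shows "slice_compatible_form (\<lambda>v w. G (D v) (D w))"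
  unfolding slice_compatible_form_def lorentzian_form_def
proof (intro conjI allI impI)
  have bl: "bilinear G" using G by (rule slice_compatible_form_bilinear)
  show "bilinear (\<lambda>v w. G (D v) (D w))"
    using linear_compose[OF D(1)] bl unfolding bilinear_def o_def by blast
  show "G (D v) (D w) = G (D w) (D v)" for v w
    using G unfolding slice_compatible_form_def lorentzian_form_def by blast
  obtain e :: "'n option \<Rightarrow> 'n pt"
    where e: "\<forall>a b. G (e a) (e b) = (if a = b then if a = None then -1 else 1 else 0)"
    using G unfolding slice_compatible_form_def lorentzian_form_def by blast
  then show "\<exists>e :: 'n option \<Rightarrow> 'n pt. \<forall>a b. G (D (e a)) (D (e b)) =
      (if a = b then if a = None then -1 else 1 else 0)"
    by (intro exI[of _ "inv D \<circ> e"]) (simp add: linear_injective_inv[OF D])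
next
  fix W :: "real^'n" assume "W \<noteq> 0"
  then have "D (W, 0) \<noteq> 0" using D by (metis linear_injective_0 prod.inject zero_prod_def)
  moreover have D_W: "D (W, 0) = (fst (D (W, 0)), 0)" using snd_D[of "(W, 0)"] by (simp add: prod_eq_iff)
  ultimately have "fst (D (W, 0)) \<noteq> 0" by (metis zero_prod_def)
  then show "G (D (W, 0)) (D (W, 0)) > 0" using G D_W by (metis slice_compatible_form_def)
qed

lemma shift_pullback_metric:
  fixes g :: "'n::finite pt \<Rightarrow> 'n pt \<Rightarrow> 'n pt \<Rightarrow> real" and \<Psi> :: "'n pt \<Rightarrow> 'n pt"
  assumes G: "slice_compatible_form (g (\<Psi> q))"
    and D: "linear (dmap \<Psi> q)" "inj (dmap \<Psi> q)" and snd_D: "\<And>v. snd (dmap \<Psi> q v) = snd v"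
  shows "(0, 1) - shift (pullback_metric \<Psi> g) q = inv (dmap \<Psi> q) ((0, 1) - shift g (\<Psi> q))"
proof -
  define W where "W = normal_spatial_part (g (\<Psi> q))"
  define Y where "Y = inv (dmap \<Psi> q) (W, 1)"
  have D_Y: "dmap \<Psi> q Y = (W, 1)" using linear_injective_inv(2)[OF D] by (simp add: Y_def)
  then have Y: "Y = (fst Y, 1)" using snd_D[of Y] by (simp add: prod_eq_iff)
  have pb: "pullback_metric \<Psi> g q = (\<lambda>v w. g (\<Psi> q) (dmap \<Psi> q v) (dmap \<Psi> q w))"
    by (simp add: pullback_metric_def fun_eq_iff)
  have "\<forall>U. pullback_metric \<Psi> g q (fst Y, 1) (U, 0) = 0"
  proof
    fix U :: "real^'n"
    have "dmap \<Psi> q (U, 0) = (fst (dmap \<Psi> q (U, 0)), 0)" using snd_D[of "(U, 0)"] by (simp add: prod_eq_iff)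
    then show "pullback_metric \<Psi> g q (fst Y, 1) (U, 0) = 0"
      using normal_spatial_part_orthogonal[OF G] D_Y Y by (metis W_def pb)
  qed
  then have "shift (pullback_metric \<Psi> g) q = (- fst Y, 0)"
    using slice_compatible_form_pullback[OF G D snd_D, folded pb] by (intro shift_eqI)
  then show ?thesis
    using Y shift_eq_normal_spatial_part[of g, OF G] by (simp add: Y_def W_def)
qed

lemma adjoint_dt:
  fixes L :: "'n::finite pt \<Rightarrow> 'n pt"
  assumes "linear L" "\<And>x. snd (L x) = snd x"
  shows "adjoint L (0, 1) = (0, 1)"
proof -
  have "x \<bullet> adjoint L (0, 1) = x \<bullet> (0, 1)" for x
    using assms by (simp add: adjoint_works inner_Pair_0)
  then show ?thesis using vector_eq_ldot by blast
qed

lemma adjoint_PXstar: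
  fixes L :: "'n::finite pt \<Rightarrow> 'n pt"
  assumes L: "linear L" and snd_L: "\<And>x. snd (L x) = snd x"
    and X: "snd X = 0" and X': "(0, 1) - X' = L ((0, 1) - X)"
  shows "adjoint L (PXstar X' \<omega>) = PXstar X (adjoint L (jproj \<omega>))"
proof -
  define Y where "Y = L ((0, 1) - X)"
  define \<eta> where "\<eta> = fst \<omega>"
  have X'_eq: "X' = (0, 1) - Y" using X' by (simp add: Y_def algebra_simps)
  have "z \<bullet> adjoint L (PXstar X' \<omega>) = z \<bullet> PXstar X (adjoint L (jproj \<omega>))" for z
  proof -
    define \<omega>' where "\<omega>' = adjoint L (\<eta>, 0)"
    have "z \<bullet> adjoint L (PXstar X' \<omega>) = L z \<bullet> PXstar ((0, 1) - Y) \<omega>"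
      by (simp add: adjoint_works[OF L] X'_eq)
    also have "\<dots> = fst (L z) \<bullet> \<eta> - snd z * (\<eta> \<bullet> fst Y)"
      by (simp add: PXstar_def \<eta>_def snd_L inner_commute inner_prod_def)
    finally have lhs: "z \<bullet> adjoint L (PXstar X' \<omega>) = fst (L z) \<bullet> \<eta> - snd z * (\<eta> \<bullet> fst Y)" .
    have "z \<bullet> PXstar X (adjoint L (jproj \<omega>)) = fst z \<bullet> fst \<omega>' + snd z * (fst \<omega>' \<bullet> fst X)"
      by (simp add: PXstar_def \<omega>'_def jproj_def \<eta>_def inner_prod_def)
    also have "\<dots> = (fst z + snd z *\<^sub>R fst X, 0) \<bullet> \<omega>'"
      by (simp add: inner_Pair_0 inner_add_right inner_commute)
    also have "\<dots> = L (fst z + snd z *\<^sub>R fst X, 0) \<bullet> (\<eta>, 0)"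
      by (simp add: \<omega>'_def adjoint_works[OF L])
    also have "(fst z + snd z *\<^sub>R fst X, 0) = z - snd z *\<^sub>R ((0, 1) - X)"
      using X by (simp add: prod_eq_iff)
    also have "L (z - snd z *\<^sub>R ((0, 1) - X)) = L z - snd z *\<^sub>R Y"
      by (simp add: Y_def linear_diff[OF L] linear_scale[OF L])
    also have "(L z - snd z *\<^sub>R Y) \<bullet> (\<eta>, 0) = fst (L z) \<bullet> \<eta> - snd z * (\<eta> \<bullet> fst Y)"
      by (simp add: inner_prod_def inner_diff_right inner_commute)
    finally show ?thesis using lhs by simp
  qed
  then show ?thesis using vector_eq_ldot by blast
qed

lemma fst_adjoint_spatial:
  fixes L :: "'n::finite pt \<Rightarrow> 'n pt"
  assumes "linear L" "\<And>U. L (U, 0) = (U, 0)"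
  shows "fst (adjoint L (\<eta>, 0)) = \<eta>"
proof -
  have "U \<bullet> fst (adjoint L (\<eta>, 0)) = U \<bullet> \<eta>" for U
  proof -
    have "U \<bullet> fst (adjoint L (\<eta>, 0)) = (U, 0) \<bullet> adjoint L (\<eta>, 0)" by (simp add: inner_prod_def)
    also have "\<dots> = L (U, 0) \<bullet> (\<eta>, 0)" by (rule adjoint_works[OF assms(1)])
    finally show ?thesis using assms(2) by simp
  qed
  then show ?thesis using vector_eq_ldot by blast
qed

lemma decomp_pullback_at:
  assumes G: "slice_compatible_form (g (\<Psi> q))"
    and D: "linear (dmap \<Psi> q)" "inj (dmap \<Psi> q)" and snd_D: "\<And>v. snd (dmap \<Psi> q v) = snd v"
  shows "decomp k kinds (pullback k kinds \<Psi> T) (shift (pullback_metric \<Psi> g)) c q args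
       = jstar k (pullback k kinds \<Psi> (decomp k kinds T (shift g) c)) q args"
proof -
  define L where "L = inv (dmap \<Psi> q)"
  define X where "X = shift g (\<Psi> q)"
  define X' where "X' = shift (pullback_metric \<Psi> g) q"
  have L: "linear L" "dmap \<Psi> q (L y) = y" for y using linear_injective_inv[OF D] by (simp_all add: L_def)
  then have snd_L: "snd (L x) = snd x" for x by (metis snd_D)
  have X': "(0, 1) - X' = L ((0, 1) - X)"
    unfolding L_def X_def X'_def using G D snd_D by (rule shift_pullback_metric)
  have "dmap \<Psi> q ((0, 1) - X') = (0, 1) - X" using L(2) X' by simp
  moreover have "jproj (dmap \<Psi> q (jproj v)) = dmap \<Psi> q (jproj v)" for v
    using snd_D[of "jproj v"] by (simp add: jproj_def prod_eq_iff)
  moreover have "adjoint L (PXstar X' \<omega>) = PXstar X (adjoint L (jproj \<omega>))" for \<omega>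
    using L(1) snd_L snd_shift[of g, OF G] X' unfolding X_def by (rule adjoint_PXstar)
  ultimately show ?thesis
    unfolding decomp_def pullback_def jstar_def X'_def[symmetric] X_def[symmetric] L_def[symmetric]
    using adjoint_dt[OF L(1) snd_L] by (intro arg_cong[where f="T (\<Psi> q)"] ext) simp
qed

section \<open>Differentiability\<close>

lemma differentiable_transform_open:
  assumes "f differentiable (at p)" "open S" "p \<in> S" "\<And>x. x \<in> S \<Longrightarrow> f x = g x"
  shows "g differentiable (at p)"
  using assms by (meson differentiable_def has_derivative_transform_within_open)

lemma differentiable_transform_eventually:
  assumes "f differentiable (at p)" "eventually (\<lambda>x. f x = g x) (at p)" "f p = g p"
  shows "g differentiable (at p)"
  using assms has_derivative_transform_eventually[of f _ p UNIV g] unfolding differentiable_def by blast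

lemma smooth_on_differentiable:
  assumes "smooth_on S f" "x \<in> S" shows "f differentiable (at x)"
proof -
  have "Ck (Suc 0) S f" using assms(1) by (simp add: smooth_on_def del: Ck.simps)
  then show ?thesis using assms(2) by (auto intro: differentiableI)
qed

lemma smooth_on_frechet_derivative_differentiable:
  assumes f: "smooth_on S f" and S: "open S" "x \<in> S"
  shows "(\<lambda>y. frechet_derivative f (at y) v) differentiable (at x)"
proof -
  have "Ck (Suc (Suc 0)) S f" using f unfolding smooth_on_def by blast
  then obtain f' h where f': "\<forall>y\<in>S. (f has_derivative f' y) (at y)"
    and h: "\<forall>y\<in>S. ((\<lambda>y. f' y v) has_derivative h y) (at y)"
    unfolding Ck.simps(2) by blast
  have d: "(\<lambda>y. f' y v) differentiable (at x)" using h S(2) differentiableI by blast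
  have eq: "f' y v = frechet_derivative f (at y) v" if "y \<in> S" for y
    by (rule fun_cong[OF frechet_derivative_at]) (use f' that in blast)
  show ?thesis using d S eq by (rule differentiable_transform_open)
qed

lemma differentiable_prod:
  fixes f :: "'i \<Rightarrow> 'a::real_normed_vector \<Rightarrow> real"
  assumes "\<And>i. i \<in> I \<Longrightarrow> f i differentiable (at p)"
  shows "(\<lambda>x. \<Prod>i\<in>I. f i x) differentiable (at p)"
proof -
  have "\<forall>i\<in>I. \<exists>D. (f i has_derivative D) (at p)" using assms unfolding differentiable_def by blast
  then obtain f' where "\<forall>i\<in>I. (f i has_derivative f' i) (at p)" by (metis bchoice)
  then have "((\<lambda>x. \<Prod>i\<in>I. f i x) has_derivative
      (\<lambda>y. \<Sum>i\<in>I. f' i y * (\<Prod>j\<in>I - {i}. f j p))) (at p)"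
    by (intro has_derivative_prod) auto
  then show ?thesis by (rule differentiableI)
qed

lemma differentiable_vec_lambda:
  fixes h :: "'n::finite \<Rightarrow> 'a::real_normed_vector \<Rightarrow> real"
  assumes "\<And>k. h k differentiable (at p)"
  shows "(\<lambda>q. \<chi> k. h k q) differentiable (at p)"
proof -
  have "(\<lambda>q. \<chi> k. h k q) = (\<lambda>q. \<Sum>k\<in>UNIV. h k q *\<^sub>R axis k 1)"
    by (auto simp: fun_eq_iff vec_eq_iff axis_def sum_component if_distrib cong: if_cong)
  then show ?thesis using assms by (auto intro!: differentiable_sum differentiable_scaleR)
qed

lemma differentiable_det:
  fixes M :: "'a::real_normed_vector \<Rightarrow> real^'n::finite^'n"
  assumes "\<And>i j. (\<lambda>q. M q $ i $ j) differentiable (at p)"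
  shows "(\<lambda>q. det (M q)) differentiable (at p)"
proof -
  have "(\<lambda>q. of_int (sign \<pi>) * (\<Prod>i\<in>UNIV. M q $ i $ \<pi> i)) differentiable (at p)" for \<pi>
    by (intro differentiable_mult differentiable_const differentiable_prod assms)
  then show ?thesis unfolding det_def by simp
qed

lemma differentiable_fst [derivative_intros]:
  "f differentiable F \<Longrightarrow> (\<lambda>x. fst (f x)) differentiable F"
  unfolding differentiable_def using has_derivative_fst by blast

lemma adjoint_eq_sum_Basis:
  fixes L :: "'a::euclidean_space \<Rightarrow> 'b::euclidean_space"
  assumes "linear L"
  shows "adjoint L w = (\<Sum>b\<in>Basis. (w \<bullet> L b) *\<^sub>R b)"
proof -
  have "adjoint L w = (\<Sum>b\<in>Basis. (adjoint L w \<bullet> b) *\<^sub>R b)" by (simp add: euclidean_representation)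
  also have "\<dots> = (\<Sum>b\<in>Basis. (w \<bullet> L b) *\<^sub>R b)"
    using adjoint_works[OF assms] by (simp add: inner_commute)
  finally show ?thesis .
qed

lemma adjoint_differentiable:
  fixes L :: "'a::real_normed_vector \<Rightarrow> 'b::euclidean_space \<Rightarrow> 'b"
  assumes S: "open S" "p \<in> S" and L: "\<forall>q\<in>S. linear (L q)"
    and dL: "\<And>b. (\<lambda>q. L q b) differentiable (at p)"
  shows "(\<lambda>q. adjoint (L q) w) differentiable (at p)"
proof -
  have "(\<lambda>q. \<Sum>b\<in>Basis. (w \<bullet> L q b) *\<^sub>R b) differentiable (at p)"
    using dL by (auto intro!: differentiable_sum differentiable_scaleR)
  then show ?thesis using S by (rule differentiable_transform_open) (simp add: L adjoint_eq_sum_Basis)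
qed

lemma shift_differentiable:
  fixes g :: "'n::finite pt \<Rightarrow> 'n pt \<Rightarrow> 'n pt \<Rightarrow> real"
  assumes g: "slice_compatible_lorentzian V g" and V: "open V" "p \<in> V"
  shows "shift g differentiable (at p)"
proof -
  have coeff: "(\<lambda>q. g q v w) differentiable (at p)" for v w
    using g V smooth_on_differentiable unfolding slice_compatible_lorentzian_def by blast
  have "(\<lambda>q. normal_spatial_part (g q)) differentiable (at p)"
    unfolding normal_spatial_part_def
    using det_spatial_gram_neq_0[OF slice_compatible_lorentzian_form[OF g V(2)]]
    apply (intro differentiable_vec_lambda differentiable_divide differentiable_det)
    subgoal for k i j by (cases "j = k") (simp_all add: spatial_gram_def time_spatial_row_def coeff)
    by (simp_all add: spatial_gram_def coeff)
  then have "(\<lambda>q. (- normal_spatial_part (g q), 0::real)) differentiable (at p)"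
    by (auto intro!: derivative_intros)
  then show ?thesis using V by (rule differentiable_transform_open)
      (simp add: shift_eq_normal_spatial_part slice_compatible_lorentzian_form[OF g])
qed

lemma tensor_field_cong:
  assumes "tensor_field k V T" "\<And>i. i < k \<Longrightarrow> args i = args' i"
  shows "T p args = T p args'"
  using assms unfolding tensor_field_def by blast

lemma tensor_field_smooth: "tensor_field k V T \<Longrightarrow> smooth_on V (\<lambda>p. T p args)"
  unfolding tensor_field_def by blast

lemma tensor_field_slot_expansion:
  assumes T: "tensor_field k V T" and "p \<in> V" "i < k"
  shows "T p args = (\<Sum>b\<in>Basis. (args i \<bullet> b) * T p (args(i := b)))"
proof -
  define f where "f x = T p (args(i := x))" for x
  have lin: "linear f" using T assms(2,3) unfolding tensor_field_def f_def by blast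
  have "T p args = f (args i)" by (simp add: f_def)
  also have "\<dots> = f (\<Sum>b\<in>Basis. (args i \<bullet> b) *\<^sub>R b)" by (simp only: euclidean_representation)
  also have "\<dots> = (\<Sum>b\<in>Basis. (args i \<bullet> b) * f b)" by (simp add: linear_sum[OF lin] linear_scale[OF lin])
  finally show ?thesis by (simp add: f_def)
qed

lemma tensor_field_differentiable_comp:
  fixes T :: "'n::finite pt \<Rightarrow> (nat \<Rightarrow> 'n pt) \<Rightarrow> real" and A :: "'a::real_normed_vector \<Rightarrow> nat \<Rightarrow> 'n pt"
  assumes T: "tensor_field k V T" and V: "open V" and r: "r differentiable (at p)" "r p \<in> V"
    and A: "\<And>i. i < k \<Longrightarrow> (\<lambda>q. A q i) differentiable (at p)"
  shows "(\<lambda>q. T (r q) (A q)) differentiable (at p)"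
proof -
  have "(r \<longlongrightarrow> r p) (at p)"
    using differentiable_imp_continuous_within[OF r(1)] by (simp add: continuous_within)
  then have near: "eventually (\<lambda>q. r q \<in> V) (at p)" using V r(2) by (rule topological_tendstoD)
  \<comment> \<open>Induction on the set F of slots in which the arguments may vary; a new slot is
    expanded in the basis by linearity of T in that slot.\<close>
  have "\<forall>A. (\<forall>i\<in>F. (\<lambda>q. A q i) differentiable (at p)) \<longrightarrow> (\<forall>i<k. i \<notin> F \<longrightarrow> (\<forall>q. A q i = A p i))
      \<longrightarrow> (\<lambda>q. T (r q) (A q)) differentiable (at p)"
    if "finite F" "F \<subseteq> {..<k}" for F
    using that
  proof (induction F rule: finite_induct)
    case empty
    show ?case
    proof (intro allI impI)
      fix A :: "'a \<Rightarrow> nat \<Rightarrow> 'n pt"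
      assume const: "\<forall>i<k. i \<notin> {} \<longrightarrow> (\<forall>q. A q i = A p i)"
      have "T (r q) (A q) = T (r q) (A p)" for q
        by (rule tensor_field_cong[OF T]) (use const in blast)
      then have "(\<lambda>q. T (r q) (A q)) = (\<lambda>z. T z (A p)) \<circ> r" by auto
      moreover have "(\<lambda>z. T z (A p)) differentiable (at (r p))"
        using smooth_on_differentiable[OF tensor_field_smooth[OF T] r(2)] .
      ultimately show "(\<lambda>q. T (r q) (A q)) differentiable (at p)"
        using differentiable_chain_at[OF r(1)] by simp
    qed
  next
    case (insert i F)
    have "F \<subseteq> {..<k}" using insert.prems by simp
    note IH = insert.IH[OF this]
    have "i < k" using insert.prems by simp
    show ?case
    proof (intro allI impI)
      fix A :: "'a \<Rightarrow> nat \<Rightarrow> 'n pt"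
      assume d: "\<forall>j\<in>insert i F. (\<lambda>q. A q j) differentiable (at p)"
        and c: "\<forall>j<k. j \<notin> insert i F \<longrightarrow> (\<forall>q. A q j = A p j)"
      have "(\<lambda>q. T (r q) ((A q)(i := b))) differentiable (at p)" for b
      proof -
        have "(\<lambda>q. ((A q)(i := b)) j) differentiable (at p)" if "j \<in> F" for j
        proof -
          have "j \<noteq> i" using that insert.hyps(2) by blast
          then have "(\<lambda>q. ((A q)(i := b)) j) = (\<lambda>q. A q j)" by simp
          then show ?thesis using d that by simp
        qed
        moreover have "((A q)(i := b)) j = ((A p)(i := b)) j" if "j < k" "j \<notin> F" for j q
          using that c[rule_format, of j q] by (cases "j = i") simp_all
        ultimately show ?thesis using IH[rule_format, of "\<lambda>q. (A q)(i := b)"] by blast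
      qed
      then have "(\<lambda>q. \<Sum>b\<in>Basis. (A q i \<bullet> b) * T (r q) ((A q)(i := b))) differentiable (at p)"
        using d by (auto intro!: differentiable_sum differentiable_mult)
      moreover have expand: "(\<Sum>b\<in>Basis. (A q i \<bullet> b) * T (r q) ((A q)(i := b))) = T (r q) (A q)"
        if "r q \<in> V" for q by (rule tensor_field_slot_expansion[OF T that \<open>i < k\<close>, symmetric])
      moreover have "eventually (\<lambda>q. (\<Sum>b\<in>Basis. (A q i \<bullet> b) * T (r q) ((A q)(i := b))) = T (r q) (A q)) (at p)"
        using near expand by (rule eventually_mono)
      ultimately show "(\<lambda>q. T (r q) (A q)) differentiable (at p)"
        using expand[OF r(2)] by (blast intro: differentiable_transform_eventually)
    qed
  qed
  from this[of "{..<k}"] show ?thesis using A by simp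
qed

lemma decomp_differentiable:
  assumes T: "tensor_field k V T" and V: "open V" "p \<in> V" and X: "X differentiable (at p)"
  shows "(\<lambda>q. decomp k kinds T X c q args) differentiable (at p)"
  unfolding decomp_def using X
  apply (intro tensor_field_differentiable_comp[OF T V(1) differentiable_ident V(2)])
  subgoal for i
    by (cases "kinds i"; cases "c i") (auto simp: PXstar_def intro!: derivative_intros differentiable_inner)
  done

lemma has_derivative_dmap: "f differentiable (at p) \<Longrightarrow> (f has_derivative dmap f p) (at p)"
  by (simp add: dmap_def frechet_derivative_works)

lemma has_derivative_eq_on_slice:
  fixes f h :: "'n::finite pt \<Rightarrow> 'b::real_normed_vector"
  assumes U: "open U" "p \<in> U" and f: "(f has_derivative F) (at p)" and h: "(h has_derivative H) (at p)"
    and eq: "\<And>q. q \<in> U \<Longrightarrow> snd q = snd p \<Longrightarrow> f q = h q"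
  shows "F (W, 0) = H (W, 0)"
proof -
  define v :: "'n pt" where "v = (W, 0)"
  obtain e where e: "e > 0" "ball p e \<subseteq> U" using U open_contains_ball by blast
  have line: "((\<lambda>s::real. p + s *\<^sub>R v) has_derivative (\<lambda>s. s *\<^sub>R v)) (at 0)"
    by (auto intro!: derivative_eq_intros)
  have "(f has_derivative F) (at (p + 0 *\<^sub>R v))" "(h has_derivative H) (at (p + 0 *\<^sub>R v))"
    using f h by simp_all
  from diff_chain_at[OF line this(1)] diff_chain_at[OF line this(2)]
  have f_line: "((\<lambda>s. f (p + s *\<^sub>R v)) has_derivative (\<lambda>s. F (s *\<^sub>R v))) (at 0)"
    and h_line: "((\<lambda>s. h (p + s *\<^sub>R v)) has_derivative (\<lambda>s. H (s *\<^sub>R v))) (at 0)"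
    by (simp_all add: o_def)
  define d where "d = e / (norm v + 1)"
  have n: "norm v + 1 > 0" by (rule add_nonneg_pos[OF norm_ge_zero zero_less_one])
  then have "d > 0" using e by (simp add: d_def)
  have "((\<lambda>s. h (p + s *\<^sub>R v)) has_derivative (\<lambda>s. F (s *\<^sub>R v))) (at 0)"
  proof (rule has_derivative_transform_within[OF f_line \<open>d > 0\<close>])
    fix s :: real assume "s \<in> UNIV" "dist s 0 < d"
    have "\<bar>s\<bar> * norm v \<le> \<bar>s\<bar> * (norm v + 1)" by (simp add: mult_left_mono)
    also have "\<dots> < d * (norm v + 1)"
      using \<open>dist s 0 < d\<close> n by (intro mult_strict_right_mono) simp_all
    also have "\<dots> = e" using n by (simp add: d_def)
    finally have "\<bar>s\<bar> * norm v < e" .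
    then have "p + s *\<^sub>R v \<in> U" using e by (auto simp: dist_norm)
    moreover have "snd (p + s *\<^sub>R v) = snd p" by (simp add: v_def)
    ultimately show "f (p + s *\<^sub>R v) = h (p + s *\<^sub>R v)" using eq by blast
  qed simp
  then have "(\<lambda>s. F (s *\<^sub>R v)) = (\<lambda>s. H (s *\<^sub>R v))" using h_line by (rule has_derivative_unique)
  from fun_cong[OF this, of 1] show ?thesis by (simp add: v_def)
qed

section \<open>Time-preserving diffeomorphisms\<close>

locale time_preserving_diffeo =
  fixes U V :: "'n::finite pt set" and \<Psi> :: "'n pt \<Rightarrow> 'n pt"
  assumes open_U: "open U" and open_V: "open V" and diffeo: "diffeo U V \<Psi>"
    and snd_Psi: "\<forall>p\<in>U. snd (\<Psi> p) = snd p"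
begin

lemma Psi_in_V: "p \<in> U \<Longrightarrow> \<Psi> p \<in> V"
  using diffeo unfolding diffeo_def by (meson bij_betwE)

lemma Psi_differentiable: "p \<in> U \<Longrightarrow> \<Psi> differentiable (at p)"
  using diffeo unfolding diffeo_def by (blast intro: smooth_on_differentiable)

lemma linear_dmap: "p \<in> U \<Longrightarrow> linear (dmap \<Psi> p)"
  using has_derivative_dmap[OF Psi_differentiable] has_derivative_linear by blast

lemma dmap_left_inverse:
  obtains \<Phi> where "smooth_on V \<Phi>" "\<And>p v. p \<in> U \<Longrightarrow> dmap \<Phi> (\<Psi> p) (dmap \<Psi> p v) = v"
proof -
  obtain \<Phi> where \<Phi>: "smooth_on V \<Phi>" "\<forall>p\<in>U. \<Phi> (\<Psi> p) = p"
    using diffeo unfolding diffeo_def by blast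
  have "dmap \<Phi> (\<Psi> p) (dmap \<Psi> p v) = v" if p: "p \<in> U" for p v
  proof -
    have "((\<Phi> \<circ> \<Psi>) has_derivative (dmap \<Phi> (\<Psi> p) \<circ> dmap \<Psi> p)) (at p)"
      using smooth_on_differentiable[OF \<Phi>(1) Psi_in_V[OF p]] Psi_differentiable[OF p]
      by (blast intro: diff_chain_at has_derivative_dmap)
    moreover have "((\<Phi> \<circ> \<Psi>) has_derivative (\<lambda>x. x)) (at p)"
      by (rule has_derivative_transform_within_open[OF has_derivative_ident open_U p]) (simp add: \<Phi>(2))
    ultimately have "dmap \<Phi> (\<Psi> p) \<circ> dmap \<Psi> p = (\<lambda>x. x)" by (rule has_derivative_unique)
    from fun_cong[OF this, of v] show ?thesis by simp
  qed
  then show ?thesis using \<Phi>(1) that by blast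
qed

lemma inj_dmap:
  assumes "p \<in> U" shows "inj (dmap \<Psi> p)"
proof -
  obtain \<Phi> where \<Phi>: "\<And>p v. p \<in> U \<Longrightarrow> dmap \<Phi> (\<Psi> p) (dmap \<Psi> p v) = v"
    using dmap_left_inverse by blast
  show ?thesis by (rule injI) (metis \<Phi>[OF assms])
qed

lemma snd_dmap:
  assumes p: "p \<in> U" shows "snd (dmap \<Psi> p v) = snd v"
proof -
  have "((\<lambda>x. snd (\<Psi> x)) has_derivative (\<lambda>v. snd (dmap \<Psi> p v))) (at p)"
    using has_derivative_dmap[OF Psi_differentiable[OF p]] by (rule has_derivative_snd)
  moreover have "((\<lambda>x. snd (\<Psi> x)) has_derivative snd) (at p)"
    by (rule has_derivative_transform_within_open[OF has_derivative_snd[OF has_derivative_ident] open_U p])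
      (simp add: snd_Psi)
  ultimately have "(\<lambda>v. snd (dmap \<Psi> p v)) = snd" by (rule has_derivative_unique)
  from fun_cong[OF this, of v] show ?thesis by simp
qed

lemma dmap_differentiable: "p \<in> U \<Longrightarrow> (\<lambda>q. dmap \<Psi> q v) differentiable (at p)"
  using diffeo open_U unfolding diffeo_def dmap_def by (blast intro: smooth_on_frechet_derivative_differentiable)

lemma adjoint_inv_dmap_differentiable:
  assumes p: "p \<in> U" shows "(\<lambda>q. adjoint (inv (dmap \<Psi> q)) w) differentiable (at p)"
proof (rule adjoint_differentiable[OF open_U p])
  show "\<forall>q\<in>U. linear (inv (dmap \<Psi> q))" using linear_injective_inv linear_dmap inj_dmap by blast
  obtain \<Phi> where \<Phi>: "smooth_on V \<Phi>" "\<And>p v. p \<in> U \<Longrightarrow> dmap \<Phi> (\<Psi> p) (dmap \<Psi> p v) = v"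
    using dmap_left_inverse by blast
  fix b
  have eq: "inv (dmap \<Psi> q) b = dmap \<Phi> (\<Psi> q) b" if q: "q \<in> U" for q
  proof -
    have "dmap \<Psi> q (inv (dmap \<Psi> q) b) = b"
      by (rule linear_injective_inv(2)[OF linear_dmap[OF q] inj_dmap[OF q]])
    then show ?thesis using \<Phi>(2)[OF q, of "inv (dmap \<Psi> q) b"] by simp
  qed
  have "(\<lambda>q. dmap \<Phi> (\<Psi> q) b) differentiable (at p)"
    using differentiable_chain_at[OF Psi_differentiable[OF p]
        smooth_on_frechet_derivative_differentiable[OF \<Phi>(1) open_V Psi_in_V[OF p]]]
    by (simp add: o_def dmap_def)
  then show "(\<lambda>q. inv (dmap \<Psi> q) b) differentiable (at p)"
    using open_U p by (rule differentiable_transform_open) (simp add: eq)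
qed

lemma dmap_spatial_on_fixed_slice:
  assumes p: "p \<in> U" and fixed: "\<And>q. q \<in> U \<Longrightarrow> snd q = snd p \<Longrightarrow> \<Psi> q = q"
  shows "dmap \<Psi> p (W, 0) = (W, 0)"
  using has_derivative_eq_on_slice[OF open_U p has_derivative_dmap[OF Psi_differentiable[OF p]]
      has_derivative_ident] fixed by simp

end

section \<open>Decomposition of the pulled-back tensor\<close>

locale tensor_pullback = time_preserving_diffeo U V \<Psi>
  for U V :: "'n::finite pt set" and \<Psi> :: "'n pt \<Rightarrow> 'n pt" +
  fixes g :: "'n pt \<Rightarrow> 'n pt \<Rightarrow> 'n pt \<Rightarrow> real"
    and k :: nat and kinds :: "nat \<Rightarrow> bool" and T :: "'n pt \<Rightarrow> (nat \<Rightarrow> 'n pt) \<Rightarrow> real"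
  assumes metric: "slice_compatible_lorentzian V g" and tensor: "tensor_field k V T"
begin

abbreviation B where "B c \<equiv> decomp k kinds T (shift g) c"

abbreviation B_hat where
  "B_hat c \<equiv> decomp k kinds (pullback k kinds \<Psi> T) (shift (pullback_metric \<Psi> g)) c"

lemma decomp_pullback: "q \<in> U \<Longrightarrow> B_hat c q args = jstar k (pullback k kinds \<Psi> (B c)) q args"
  using slice_compatible_lorentzian_form[OF metric Psi_in_V] linear_dmap inj_dmap snd_dmap
  by (rule decomp_pullback_at[where g = g and \<Psi> = \<Psi> and q = q])

lemma decomp_pullback_on_fixed_slice:
  assumes fixed: "\<forall>q\<in>U. snd q = t0 \<longrightarrow> \<Psi> q = q" and p: "p \<in> U" "snd p = t0"
  shows "B_hat c p args = B c p args"
proof -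
  have Psi_p: "\<Psi> p = p" using fixed p by blast
  have D: "dmap \<Psi> p (W, 0) = (W, 0)" for W
    by (rule dmap_spatial_on_fixed_slice) (use fixed p in auto)
  have "inv (dmap \<Psi> p) (W, 0) = (W, 0)" for W
    using inv_f_f[OF inj_dmap[OF p(1)], of "(W, 0)"] D by simp
  with linear_injective_inv(1)[OF linear_dmap[OF p(1)] inj_dmap[OF p(1)]]
  have adj: "fst (adjoint (inv (dmap \<Psi> p)) (\<eta>, 0)) = \<eta>" for \<eta>
    by (rule fst_adjoint_spatial)
  have "B_hat c p args = jstar k (pullback k kinds \<Psi> (B c)) p args" by (rule decomp_pullback[OF p(1)])
  also have "\<dots> = B c p args"
    unfolding jstar_def pullback_def decomp_def Psi_p
    by (intro arg_cong[where f = "T p"] ext) (simp add: jproj_def PXstar_def D adj)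
  finally show ?thesis .
qed

lemma jstar_pullback_decomp_differentiable:
  assumes p: "p \<in> U"
  shows "(\<lambda>q. jstar k (pullback k kinds \<Psi> (B c)) q args) differentiable (at p)"
proof -
  have X: "(\<lambda>q. shift g (\<Psi> q)) differentiable (at p)"
    using differentiable_chain_at[OF Psi_differentiable[OF p]
        shift_differentiable[OF metric open_V Psi_in_V[OF p]]] by (simp add: o_def)
  show ?thesis
    unfolding jstar_def pullback_def decomp_def
    apply (rule tensor_field_differentiable_comp[OF tensor open_V Psi_differentiable[OF p] Psi_in_V[OF p]])
    subgoal for i
      using X dmap_differentiable[OF p] adjoint_inv_dmap_differentiable[OF p]
      by (cases "kinds i"; cases "c i")
        (auto simp: PXstar_def jproj_def intro!: derivative_intros differentiable_inner)
    done
qed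

lemma lie_decomp_pullback_on_fixed_slice:
  assumes fixed: "\<forall>q\<in>U. snd q = t0 \<longrightarrow> \<Psi> q = q" and p: "p \<in> U" "snd p = t0"
    and S: "snd (S p) = 0"
  shows "lie k kinds S (B_hat c) p args = lie k kinds S (B c) p args"
proof -
  have "p \<in> V" using Psi_in_V[OF p(1)] fixed p by simp
  have "(\<lambda>q. B c q args) differentiable (at p)"
    using decomp_differentiable[OF tensor open_V \<open>p \<in> V\<close> shift_differentiable[OF metric open_V \<open>p \<in> V\<close>]] .
  then obtain F where F: "((\<lambda>q. B c q args) has_derivative F) (at p)"
    unfolding differentiable_def by blast
  have "(\<lambda>q. B_hat c q args) differentiable (at p)"
    using jstar_pullback_decomp_differentiable[OF p(1)] open_U p(1)
    by (rule differentiable_transform_open) (simp add: decomp_pullback)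
  then obtain F_hat where F_hat: "((\<lambda>q. B_hat c q args) has_derivative F_hat) (at p)"
    unfolding differentiable_def by blast
  have "F_hat (fst (S p), 0) = F (fst (S p), 0)"
    using open_U p(1) F_hat F
    by (rule has_derivative_eq_on_slice) (use decomp_pullback_on_fixed_slice[OF fixed] p in simp)
  moreover have "S p = (fst (S p), 0)" using S by (simp add: prod_eq_iff)
  ultimately have same_derivative: "frechet_derivative (\<lambda>q. B_hat c q args) (at p) (S p)
      = frechet_derivative (\<lambda>q. B c q args) (at p) (S p)"
    using frechet_derivative_at[OF F] frechet_derivative_at[OF F_hat] by metis
  have same_value: "B_hat c p a = B c p a" for a
    using fixed p by (rule decomp_pullback_on_fixed_slice)
  show ?thesis unfolding lie_def by (simp only: same_derivative same_value)
qed

end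

theorem lemma5p1:
  fixes \<Sigma> :: "(real^'n) set" and I :: "real set"
    and U V :: "('n::finite) pt set" and \<Psi> :: "('n::finite) pt \<Rightarrow> ('n::finite) pt"
    and g :: "('n::finite) pt \<Rightarrow> ('n::finite) pt \<Rightarrow> ('n::finite) pt \<Rightarrow> real"
    and k :: nat and kinds :: "nat \<Rightarrow> bool"
    and T :: "('n::finite) pt \<Rightarrow> (nat \<Rightarrow> ('n::finite) pt) \<Rightarrow> real"
  assumes "open \<Sigma>" and "open I" and "is_interval I"
    and "open U" and "open V" and "U \<subseteq> \<Sigma> \<times> I" and "V \<subseteq> \<Sigma> \<times> I"
    and "diffeo U V \<Psi>"
    and "\<forall>p\<in>U. snd (\<Psi> p) = snd p"
    and "slice_compatible_lorentzian V g"
    and "tensor_field k V T"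
  shows "(\<forall>c. \<forall>p\<in>U. \<forall>args.
            decomp k kinds (pullback k kinds \<Psi> T) (shift (pullback_metric \<Psi> g)) c p args
          = jstar k (pullback k kinds \<Psi> (decomp k kinds T (shift g) c)) p args)
     \<and> (\<forall>t0. (\<forall>p\<in>U. snd p = t0 \<longrightarrow> \<Psi> p = p) \<longrightarrow>
          (\<forall>c. \<forall>p\<in>U. \<forall>args. snd p = t0 \<longrightarrow>
              decomp k kinds (pullback k kinds \<Psi> T) (shift (pullback_metric \<Psi> g)) c p args
            = decomp k kinds T (shift g) c p args)
        \<and> (\<forall>S. smooth_on U S \<and> (\<forall>p\<in>U. snd (S p) = 0) \<longrightarrow>
          (\<forall>c. \<forall>p\<in>U. \<forall>args. snd p = t0 \<longrightarrow>
              lie k kinds S (decomp k kinds (pullback k kinds \<Psi> T)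
                                 (shift (pullback_metric \<Psi> g)) c) p args
            = lie k kinds S (decomp k kinds T (shift g) c) p args)))"
proof -
  interpret tensor_pullback U V \<Psi> g k kinds T
    using assms(4,5,8-11) by unfold_locales
  show ?thesis
    using decomp_pullback decomp_pullback_on_fixed_slice lie_decomp_pullback_on_fixed_slice by blast
qed

end
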